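(* Let $u_1,\dots,u_n\in\mathbb{R}^d$, $c_1,\dots,c_m\in\mathbb{R}^n_{\ge0}$, budgets $b_1,\dots,b_m$, and $\varepsilon>0$ with $b_j\ge\frac{d\|c_j\|_\infty}{\varepsilon}$ for all $1\le j\le m$. Let $x\in[0,1]^n$ be an optimal solution of the convex program: maximize $\log\det(\sum_{i=1}^n x(i)u_iu_i^\top)$ subject to $\langle c_j,x\rangle\le b_j$ ($1\le j\le m$), $0\le x(i)\le1$ ($1\le i\le n$). Let $X=\sum_i x(i)u_iu_i^\top$ (nonsingular) and $v_i=X^{-1/2}u_i$. Then $\|v_i\|_2^2\le\varepsilon$ for each $i$ with $0<x(i)<1$. *)

theory Defs
  imports "HOL-Analysis.Analysis"
begin

definition outer :: "real^'d \<Rightarrow> real^'d^'d" where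
  "outer u = (\<chi> a b. u $ a * u $ b)"

definition design_mat :: "('n::finite \<Rightarrow> real^'d) \<Rightarrow> real^'n \<Rightarrow> real^'d^'d" where
  "design_mat u x = (\<Sum>i\<in>UNIV. x $ i *\<^sub>R outer (u i))"

definition logdet :: "real^'d^'d \<Rightarrow> ereal" where
  "logdet A = (if det A > 0 then ereal (ln (det A)) else -\<infinity>)"

definition psd :: "real^'d^'d \<Rightarrow> bool" where
  "psd A \<longleftrightarrow> transpose A = A \<and> (\<forall>v. 0 \<le> v \<bullet> (A *v v))"

definition mat_sqrt :: "real^'d^'d \<Rightarrow> real^'d^'d" where
  "mat_sqrt A = (THE S. psd S \<and> S ** S = A)"

definition feasible :: "('m \<Rightarrow> real^'n) \<Rightarrow> ('m \<Rightarrow> real) \<Rightarrow> real^'n \<Rightarrow> bool" where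
  "feasible c b x \<longleftrightarrow> (\<forall>j. c j \<bullet> x \<le> b j) \<and> (\<forall>i. 0 \<le> x $ i \<and> x $ i \<le> 1)"

definition optimal :: "('n::finite \<Rightarrow> real^'d) \<Rightarrow> ('m \<Rightarrow> real^'n) \<Rightarrow> ('m \<Rightarrow> real) \<Rightarrow> real^'n \<Rightarrow> bool" where
  "optimal u c b x \<longleftrightarrow> feasible c b x \<and>
     (\<forall>y. feasible c b y \<longrightarrow> logdet (design_mat u y) \<le> logdet (design_mat u x))"

end

theory Submission
  imports Defs
begin

(* Suppose x(i) < 1 but the leverage g = u_i^T X^-1 u_i exceeds epsilon.  Shrinking x by the
   factor 1 - s, with s = t epsilon / d, and raising x(i) by t keeps the point feasible, since
   the budget condition pays for the extra cost t c_j(i) <= t ||c_j||_inf <= s b_j.  By the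
   matrix determinant lemma the new design matrix has determinant
   (1 - s)^d det X (1 + t g / (1 - s)), whose derivative at t = 0 is (g - epsilon) det X > 0,
   contradicting optimality.  The squared norm in the statement equals g because the positive
   semidefinite square root of X^-1 exists and is unique, by the spectral theorem. *)

lemma transpose_add: "transpose (A + B) = transpose A + transpose (B :: 'a::semiring_1^'n^'m)"
  by (simp add: transpose_def vec_eq_iff)

lemma transpose_diff: "transpose (A - B) = transpose A - transpose (B :: 'a::ring_1^'n^'m)"
  by (simp add: transpose_def vec_eq_iff)

lemma transpose_sum:
  "transpose (\<Sum>i\<in>I. f i) = (\<Sum>i\<in>I. transpose (f i :: 'a::semiring_1^'n^'m))"
  by (induction I rule: infinite_finite_induct) (auto simp: transpose_add transpose_def vec_eq_iff)

lemma sum_matrix_vector_mult: "(\<Sum>i\<in>I. f i) *v v = (\<Sum>i\<in>I. f i *v v)"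
  for f :: "'a \<Rightarrow> real^'n^'m"
  by (induction I rule: infinite_finite_induct) (auto simp: matrix_vector_mult_add_rdistrib)

lemma symmetric_matrix_inner:
  fixes A :: "real^'n^'n"
  assumes "transpose A = A"
  shows "(A *v v) \<bullet> w = v \<bullet> (A *v w)"
  by (metis assms dot_lmul_matrix inner_commute transpose_matrix_vector)

lemma matrix_inv_mult:
  fixes A :: "'a::field^'n^'n"
  assumes "invertible A"
  shows "A ** matrix_inv A = mat 1" and "matrix_inv A ** A = mat 1"
  using someI_ex[OF assms[unfolded invertible_def]] by (simp_all add: matrix_inv_def)

lemma transpose_matrix_inv_symmetric:
  fixes A :: "real^'n^'n"
  assumes "invertible A" and "transpose A = A"
  shows "transpose (matrix_inv A) = matrix_inv A"
proof -
  have "transpose (matrix_inv A) ** A = mat 1"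
    by (metis assms matrix_inv_mult(1) matrix_transpose_mul transpose_mat)
  then have "transpose (matrix_inv A) = transpose (matrix_inv A) ** (A ** matrix_inv A)"
    using matrix_inv_mult(1)[OF assms(1)] by simp
  also have "\<dots> = matrix_inv A"
    by (simp add: matrix_mul_assoc \<open>transpose (matrix_inv A) ** A = mat 1\<close>)
  finally show ?thesis .
qed

lemma matrix_add_rdistrib: "(A + B) ** C = A ** C + B ** (C :: 'a::semiring_1^'n^'k)"
  by (vector matrix_matrix_mult_def sum.distrib[symmetric] distrib_right)

lemma det_scaleR: "det (k *\<^sub>R A) = k ^ CARD('n) * det (A :: real^'n^'n)"
  by (simp add: det_def sum_distrib_left prod.distrib algebra_simps)

section \<open>Rank-one updates of determinants\<close>

definition rank_one :: "'a::times^'n \<Rightarrow> 'a^'m \<Rightarrow> 'a^'m^'n" where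
  "rank_one a b = (\<chi> i j. a $ i * b $ j)"

lemma outer_eq_rank_one: "outer u = rank_one u u"
  by (simp add: outer_def rank_one_def)

lemma rank_one_mult_vec: "rank_one a b *v v = (b \<bullet> v) *\<^sub>R (a :: real^'n)"
  by (simp add: rank_one_def matrix_vector_mult_def inner_vec_def vec_eq_iff sum_distrib_left
      algebra_simps)

lemma transpose_rank_one: "transpose (rank_one a b) = rank_one b (a :: 'a::comm_semiring_1^'n)"
  by (simp add: rank_one_def transpose_def vec_eq_iff mult.commute)

lemma matrix_mul_rank_one: "M ** rank_one a b = rank_one (M *v a) (b :: 'a::comm_semiring_1^'k)"
  by (simp add: rank_one_def matrix_matrix_mult_def matrix_vector_mult_def vec_eq_iff
      sum_distrib_right mult.assoc)

lemma rank_one_matrix_mul: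
  "rank_one a b ** M = rank_one (a :: 'a::comm_semiring_1^'k) (transpose M *v b)"
  by (simp add: rank_one_def matrix_matrix_mult_def matrix_vector_mult_def transpose_def vec_eq_iff
      sum_distrib_left algebra_simps)

lemma det_mat1_add_rank_one: "det (mat 1 + rank_one a b) = 1 + b \<bullet> (a :: real^'n)"
proof (cases "a = 0")
  case True
  then have "rank_one a b = 0" by (simp add: rank_one_def vec_eq_iff)
  with True show ?thesis by simp
next
  case False
  then obtain k where ak: "a $ k \<noteq> 0" by (auto simp: vec_eq_iff)
  \<comment> \<open>Conjugating by E (so that E e_k = a) turns a b^T into e_k w^T, and
    det (I + e_k w^T) = 1 + w_k by Cramer's lemma.\<close>
  define E :: "real^'n^'n" where "E = (\<chi> i j. if j = k then a $ i else mat 1 $ i $ j)"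
  define w where "w = transpose E *v b"
  have det_E: "det E = a $ k"
    using cramer_lemma[where A = "mat 1 :: real^'n^'n" and k = k and x = a]
    unfolding E_def matrix_vector_mul_lid det_I by simp
  have "(E *v axis k 1) $ i = E $ i $ k" for i
    by (metis cart_eq_inner_axis matrix_vector_mul_component)
  then have "E *v axis k 1 = a" by (simp add: E_def vec_eq_iff)
  then have "(mat 1 + rank_one a b) ** E = E ** (mat 1 + rank_one (axis k 1) w)"
    by (simp add: matrix_add_ldistrib matrix_add_rdistrib matrix_mul_rank_one rank_one_matrix_mul
        w_def)
  then have "det (mat 1 + rank_one a b) * det E = det E * det (mat 1 + rank_one (axis k 1) w)"
    by (metis det_mul)
  moreover have "det (mat 1 + rank_one (axis k 1) w) = 1 + w $ k"
  proof -
    have "transpose (mat 1 + rank_one (axis k 1) w)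
        = (\<chi> i j. if j = k then (axis k 1 + w) $ i else (mat 1 :: real^'n^'n) $ i $ j)"
      by (simp add: transpose_def rank_one_def vec_eq_iff mat_def axis_def)
    then have "det (transpose (mat 1 + rank_one (axis k 1) w)) = (axis k 1 + w) $ k"
      using cramer_lemma[where A = "mat 1 :: real^'n^'n" and k = k and x = "axis k 1 + w"]
      unfolding matrix_vector_mul_lid by simp
    then show ?thesis by simp
  qed
  moreover have "w $ k = b \<bullet> a"
    by (simp add: w_def E_def matrix_vector_mult_def transpose_def inner_vec_def mult.commute)
  ultimately show ?thesis using det_E ak by simp
qed

lemma det_add_rank_one:
  fixes X :: "real^'n^'n"
  assumes "invertible X"
  shows "det (X + rank_one a b) = det X * (1 + b \<bullet> (matrix_inv X *v a))"
proof -
  have "X + rank_one a b = X ** (mat 1 + rank_one (matrix_inv X *v a) b)"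
    by (simp add: matrix_add_ldistrib matrix_mul_rank_one matrix_vector_mul_assoc
        matrix_inv_mult[OF assms])
  then show ?thesis by (simp add: det_mul det_mat1_add_rank_one)
qed

lemma det_scaleR_add_rank_one:
  fixes X :: "real^'n^'n"
  assumes "invertible X" and "a \<noteq> 0"
  shows "det (a *\<^sub>R X + t *\<^sub>R rank_one v v)
    = a ^ CARD('n) * det X * (1 + t / a * (v \<bullet> (matrix_inv X *v v)))"
proof -
  have "a *\<^sub>R X + t *\<^sub>R rank_one v v = a *\<^sub>R (X + rank_one v ((t / a) *\<^sub>R v))"
    using assms(2) by (simp add: rank_one_def vec_eq_iff algebra_simps)
  then show ?thesis
    by (simp add: det_scaleR det_add_rank_one[OF assms(1)])
qed

section \<open>Spectral theorem for symmetric matrices\<close>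

lemma psd_on_subspace_kernel:
  fixes M :: "real^'n^'n"
  assumes sym: "transpose M = M" and V: "subspace V" and MV: "\<forall>w\<in>V. M *v w \<in> V"
    and psd: "\<forall>w\<in>V. 0 \<le> w \<bullet> (M *v w)" and v: "v \<in> V" and zero: "v \<bullet> (M *v v) = 0"
  shows "M *v v = 0"
proof -
  define z where "z = M *v v"
  define a b where "a = z \<bullet> z" and "b = z \<bullet> (M *v z)"
  have "z \<in> V" using MV v by (simp add: z_def)
  have b: "0 \<le> b" using psd \<open>z \<in> V\<close> by (simp add: b_def)
  have quadratic: "0 \<le> t * (2 * a + t * b)" for t
  proof -
    have "v + t *\<^sub>R z \<in> V" using V v \<open>z \<in> V\<close> by (simp add: subspace_add subspace_mul)
    then have "0 \<le> (v + t *\<^sub>R z) \<bullet> (M *v (v + t *\<^sub>R z))" using psd by blast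
    also have "\<dots> = t * (2 * a + t * b)"
      using symmetric_matrix_inner[OF sym, of v z] zero
      by (simp add: a_def b_def z_def matrix_vector_right_distrib inner_add_left inner_add_right
          matrix_vector_mult_scaleR inner_commute algebra_simps)
    finally show ?thesis .
  qed
  have "a = 0"
  proof (rule ccontr)
    assume "a \<noteq> 0"
    then have "0 < a" by (simp add: a_def)
    define t where "t = - a / (b + 1)"
    have bt: "(b + 1) * t = - a" using b by (simp add: t_def)
    have "(b + 1)\<^sup>2 * (t * (2 * a + t * b)) = ((b + 1) * t) * (2 * a * (b + 1) + ((b + 1) * t) * b)"
      by (simp add: power2_eq_square algebra_simps)
    also have "\<dots> = - (a\<^sup>2 * (b + 2))" unfolding bt by (simp add: power2_eq_square algebra_simps)
    finally have "(b + 1)\<^sup>2 * (t * (2 * a + t * b)) = - (a\<^sup>2 * (b + 2))" .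
    moreover have "0 \<le> (b + 1)\<^sup>2 * (t * (2 * a + t * b))" using quadratic by simp
    moreover have "0 < a\<^sup>2 * (b + 2)" using \<open>0 < a\<close> b by simp
    ultimately show False by linarith
  qed
  then show ?thesis by (simp add: a_def z_def)
qed

definition orthonormal_eigenbasis :: "real^'n^'n \<Rightarrow> (real^'n) set \<Rightarrow> (real^'n) set \<Rightarrow> bool" where
  "orthonormal_eigenbasis A V B \<longleftrightarrow> finite B \<and> B \<subseteq> V \<and> pairwise orthogonal B \<and>
     (\<forall>b\<in>B. norm b = 1 \<and> A *v b = (b \<bullet> (A *v b)) *\<^sub>R b) \<and>
     (\<forall>w\<in>V. w = (\<Sum>b\<in>B. (b \<bullet> w) *\<^sub>R b))"

lemma symmetric_unit_eigenvector:
  fixes A :: "real^'n^'n"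
  assumes sym: "transpose A = A" and V: "subspace V" and AV: "\<forall>w\<in>V. A *v w \<in> V"
    and nontrivial: "V \<noteq> {0}"
  shows "\<exists>v\<in>V. norm v = 1 \<and> A *v v = (v \<bullet> (A *v v)) *\<^sub>R v"
proof -
  let ?S = "V \<inter> sphere 0 1" and ?q = "\<lambda>w. w \<bullet> (A *v w)"
  obtain v0 where "v0 \<in> V" "v0 \<noteq> 0" using nontrivial V subspace_0 by blast
  then have "v0 /\<^sub>R norm v0 \<in> ?S" using V by (simp add: subspace_mul)
  then have S_ne: "?S \<noteq> {}" by blast
  have S_compact: "compact ?S" by (simp add: V closed_subspace closed_Int_compact)
  have q_cont: "continuous_on ?S ?q"
    by (intro continuous_intros linear_continuous_on matrix_vector_mul_linear)
  obtain v where v: "v \<in> ?S" and max: "\<And>w. w \<in> ?S \<Longrightarrow> ?q w \<le> ?q v"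
    using continuous_attains_sup[OF S_compact S_ne q_cont] by blast
  \<comment> \<open>The maximum l of the Rayleigh quotient makes l I - A positive semidefinite on V.\<close>
  define l where "l = ?q v"
  define M where "M = l *\<^sub>R mat 1 - A"
  have Mw: "M *v w = l *\<^sub>R w - A *v w" for w
    by (simp add: M_def matrix_vector_mult_diff_rdistrib scaleR_matrix_vector_assoc[symmetric])
  have "v \<in> V" "v \<bullet> v = 1" using v by (auto simp: dot_square_norm)
  have "0 \<le> w \<bullet> (M *v w)" if "w \<in> V" for w
  proof (cases "w = 0")
    case False
    define u where "u = w /\<^sub>R norm w"
    have "u \<in> ?S" using that V False by (simp add: u_def subspace_mul)
    then have "?q u \<le> l" unfolding l_def by (rule max)
    moreover have "?q u = ?q w / (norm w)\<^sup>2"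
      by (simp add: u_def matrix_vector_mult_scaleR power2_eq_square divide_inverse)
    ultimately have "?q w \<le> l * (norm w)\<^sup>2" using False by (simp add: field_simps)
    then show ?thesis by (simp add: Mw inner_diff_right dot_square_norm)
  qed simp
  moreover have "transpose M = M" using sym by (simp add: M_def transpose_diff transpose_scalar)
  moreover have "\<forall>w\<in>V. M *v w \<in> V" using V AV by (simp add: Mw subspace_diff subspace_mul)
  moreover have "v \<bullet> (M *v v) = 0" using \<open>v \<bullet> v = 1\<close> by (simp add: Mw inner_diff_right l_def)
  ultimately have "M *v v = 0" using psd_on_subspace_kernel V \<open>v \<in> V\<close> by blast
  then have "A *v v = l *\<^sub>R v" by (simp add: Mw)
  moreover have "norm v = 1" using v by simp
  ultimately show ?thesis using \<open>v \<in> V\<close> unfolding l_def by blast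
qed

lemma orthonormal_eigenbasis_insert:
  fixes A :: "real^'n^'n"
  assumes "orthonormal_eigenbasis A {w \<in> V. v \<bullet> w = 0} B"
    and V: "subspace V" and "v \<in> V" and "norm v = 1" and Av: "A *v v = \<mu> *\<^sub>R v"
  shows "orthonormal_eigenbasis A V (insert v B)"
proof -
  let ?W = "{w \<in> V. v \<bullet> w = 0}"
  have "finite B" and "B \<subseteq> ?W" and B_orth: "pairwise orthogonal B"
    and B_unit: "\<And>b. b \<in> B \<Longrightarrow> norm b = 1"
    and B_eigen: "\<And>b. b \<in> B \<Longrightarrow> A *v b = (b \<bullet> (A *v b)) *\<^sub>R b"
    and B_expand: "\<And>w. w \<in> ?W \<Longrightarrow> w = (\<Sum>b\<in>B. (b \<bullet> w) *\<^sub>R b)"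
    using assms(1) unfolding orthonormal_eigenbasis_def by blast+
  have "v \<bullet> v = 1" using \<open>norm v = 1\<close> by (simp add: dot_square_norm)
  have v_orth: "b \<bullet> v = 0" if "b \<in> B" for b
    using \<open>B \<subseteq> ?W\<close> that by (auto simp: inner_commute)
  have "v \<notin> B" using v_orth[of v] \<open>v \<bullet> v = 1\<close> by auto
  show ?thesis
    unfolding orthonormal_eigenbasis_def
  proof (intro conjI ballI)
    show "finite (insert v B)" "insert v B \<subseteq> V"
      using \<open>finite B\<close> \<open>B \<subseteq> ?W\<close> \<open>v \<in> V\<close> by auto
    show "pairwise orthogonal (insert v B)"
      using B_orth v_orth by (auto simp: pairwise_insert orthogonal_def inner_commute)
  next
    fix b assume b: "b \<in> insert v B"
    show "norm b = 1" using b B_unit \<open>norm v = 1\<close> by blast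
    show "A *v b = (b \<bullet> (A *v b)) *\<^sub>R b"
    proof (cases "b = v")
      case True
      then show ?thesis using \<open>v \<bullet> v = 1\<close> by (simp add: Av)
    next
      case False
      then show ?thesis using b B_eigen by blast
    qed
  next
    fix w assume "w \<in> V"
    then have "w - (v \<bullet> w) *\<^sub>R v \<in> ?W"
      using \<open>v \<in> V\<close> \<open>v \<bullet> v = 1\<close> V by (simp add: subspace_diff subspace_mul inner_diff_right)
    then have "w - (v \<bullet> w) *\<^sub>R v = (\<Sum>b\<in>B. (b \<bullet> (w - (v \<bullet> w) *\<^sub>R v)) *\<^sub>R b)"
      by (rule B_expand)
    also have "\<dots> = (\<Sum>b\<in>B. (b \<bullet> w) *\<^sub>R b)"
      by (intro sum.cong refl) (simp add: inner_diff_right v_orth)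
    finally have "w = (\<Sum>b\<in>B. (b \<bullet> w) *\<^sub>R b) + (v \<bullet> w) *\<^sub>R v"
      by (rule diff_eq_eq[THEN iffD1])
    also have "\<dots> = (\<Sum>b\<in>insert v B. (b \<bullet> w) *\<^sub>R b)"
      using \<open>finite B\<close> \<open>v \<notin> B\<close> by (simp add: add.commute)
    finally show "w = (\<Sum>b\<in>insert v B. (b \<bullet> w) *\<^sub>R b)" .
  qed
qed

lemma symmetric_orthonormal_eigenbasis_subspace:
  fixes A :: "real^'n^'n"
  assumes sym: "transpose A = A"
  shows "subspace V \<Longrightarrow> \<forall>w\<in>V. A *v w \<in> V \<Longrightarrow> \<exists>B. orthonormal_eigenbasis A V B"
proof (induction "dim V" arbitrary: V rule: less_induct)
  case less
  show ?case
  proof (cases "V = {0}")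
    case True
    then show ?thesis by (auto simp: orthonormal_eigenbasis_def intro!: exI[of _ "{}"])
  next
    case False
    then obtain v where "v \<in> V" "norm v = 1" and eigen: "A *v v = (v \<bullet> (A *v v)) *\<^sub>R v"
      using symmetric_unit_eigenvector[OF sym less.prems] by blast
    define \<mu> where "\<mu> = v \<bullet> (A *v v)"
    have Av: "A *v v = \<mu> *\<^sub>R v" unfolding \<mu>_def by (rule eigen)
    define W where "W = {w \<in> V. v \<bullet> w = 0}"
    have "subspace W" using less.prems(1) by (auto simp: W_def subspace_def inner_add_right)
    moreover have "\<forall>w\<in>W. A *v w \<in> W"
    proof
      fix w assume "w \<in> W"
      have "v \<bullet> (A *v w) = (A *v v) \<bullet> w" by (simp add: symmetric_matrix_inner[OF sym])
      also have "\<dots> = \<mu> * (v \<bullet> w)" by (simp add: Av)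
      also have "\<dots> = 0" using \<open>w \<in> W\<close> by (simp add: W_def)
      finally show "A *v w \<in> W" using \<open>w \<in> W\<close> less.prems(2) by (simp add: W_def)
    qed
    moreover have "dim W < dim V"
    proof (rule dim_psubset)
      have "v \<notin> W" using \<open>norm v = 1\<close> by (simp add: W_def dot_square_norm)
      then have "W \<subset> V" using \<open>v \<in> V\<close> unfolding W_def by blast
      then show "span W \<subset> span V"
        using \<open>subspace W\<close> less.prems(1) by (simp add: span_eq_iff[THEN iffD2])
    qed
    ultimately obtain B where "orthonormal_eigenbasis A W B" using less.hyps by blast
    then have "orthonormal_eigenbasis A V (insert v B)"
      unfolding W_def using less.prems(1) \<open>v \<in> V\<close> \<open>norm v = 1\<close> Av
      by (rule orthonormal_eigenbasis_insert)
    then show ?thesis ..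
  qed
qed

lemma symmetric_orthonormal_eigenbasis:
  fixes A :: "real^'n^'n"
  assumes "transpose A = A"
  obtains B where "orthonormal_eigenbasis A UNIV B"
  using symmetric_orthonormal_eigenbasis_subspace[OF assms, of UNIV] by auto

section \<open>Positive semidefinite square roots\<close>

lemma sum_orthonormal_inner:
  assumes "finite B" "b \<in> B" "pairwise orthogonal B" "norm b = 1"
  shows "(\<Sum>b'\<in>B. f b' * (b \<bullet> b')) = f b"
proof -
  have "(\<Sum>b'\<in>B. f b' * (b \<bullet> b')) = f b * (b \<bullet> b) + (\<Sum>b'\<in>B - {b}. f b' * (b \<bullet> b'))"
    using assms(1,2) by (simp add: sum.remove)
  also have "(\<Sum>b'\<in>B - {b}. f b' * (b \<bullet> b')) = 0"
    using assms(2,3) by (intro sum.neutral) (auto simp: pairwise_def orthogonal_def)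
  finally show ?thesis using assms(4) by (simp add: dot_square_norm)
qed

lemma psd_sqrt_exists:
  fixes A :: "real^'n^'n"
  assumes "psd A"
  shows "\<exists>S. psd S \<and> S ** S = A"
proof -
  have sym: "transpose A = A" and nonneg: "\<And>v. 0 \<le> v \<bullet> (A *v v)"
    using assms by (auto simp: psd_def)
  obtain B where "orthonormal_eigenbasis A UNIV B"
    using symmetric_orthonormal_eigenbasis[OF sym] .
  then have "finite B" and orth: "pairwise orthogonal B"
    and unit: "\<And>b. b \<in> B \<Longrightarrow> norm b = 1"
    and eigen: "\<And>b. b \<in> B \<Longrightarrow> A *v b = (b \<bullet> (A *v b)) *\<^sub>R b"
    and expand: "\<And>w. w = (\<Sum>b\<in>B. (b \<bullet> w) *\<^sub>R b)"
    unfolding orthonormal_eigenbasis_def by blast+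
  define l where "l b = b \<bullet> (A *v b)" for b
  have Ab: "A *v b = l b *\<^sub>R b" if "b \<in> B" for b
    unfolding l_def using that by (rule eigen)
  define S where "S = (\<Sum>b\<in>B. sqrt (l b) *\<^sub>R rank_one b b)"
  have Sw: "S *v w = (\<Sum>b\<in>B. (sqrt (l b) * (b \<bullet> w)) *\<^sub>R b)" for w
    by (simp add: S_def sum_matrix_vector_mult scaleR_matrix_vector_assoc[symmetric]
        rank_one_mult_vec)
  have inner_Sw: "b \<bullet> (S *v w) = sqrt (l b) * (b \<bullet> w)" if "b \<in> B" for b w
    using sum_orthonormal_inner[OF \<open>finite B\<close> that orth unit[OF that]]
    by (simp add: Sw inner_sum_right)
  have "S *v (S *v w) = A *v w" for w
  proof -
    have "S *v (S *v w) = (\<Sum>b\<in>B. (l b * (b \<bullet> w)) *\<^sub>R b)"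
      unfolding Sw[of "S *v w"] using nonneg
      by (intro sum.cong refl) (simp add: inner_Sw l_def mult.assoc[symmetric])
    also have "\<dots> = (\<Sum>b\<in>B. (b \<bullet> w) *\<^sub>R (A *v b))"
      by (intro sum.cong refl) (simp add: Ab)
    also have "\<dots> = A *v (\<Sum>b\<in>B. (b \<bullet> w) *\<^sub>R b)"
      by (simp add: linear_sum[OF matrix_vector_mul_linear] matrix_vector_mult_scaleR)
    also have "\<dots> = A *v w" by (rule arg_cong[OF expand[symmetric]])
    finally show ?thesis .
  qed
  then have "S ** S = A" by (simp add: matrix_eq matrix_vector_mul_assoc[symmetric])
  moreover have "transpose S = S"
    by (simp add: S_def transpose_sum transpose_scalar transpose_rank_one)
  moreover have "0 \<le> v \<bullet> (S *v v)" for v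
    unfolding Sw inner_sum_right
    using nonneg by (intro sum_nonneg) (simp add: l_def inner_commute mult.assoc)
  ultimately show ?thesis by (auto simp: psd_def)
qed

lemma psd_kernel:
  fixes M :: "real^'n^'n"
  assumes "psd M" and "v \<bullet> (M *v v) = 0"
  shows "M *v v = 0"
  using psd_on_subspace_kernel[of M UNIV v] assms by (simp add: psd_def)

lemma psd_sqrt_unique:
  fixes S T :: "real^'n^'n"
  assumes S: "psd S" and T: "psd T" and square: "S ** S = T ** T"
  shows "S = T"
proof -
  define D where "D = S - T"
  have "transpose D = D" using S T by (simp add: D_def psd_def transpose_diff)
  then obtain B where "orthonormal_eigenbasis D UNIV B"
    using symmetric_orthonormal_eigenbasis by blast
  then have eigen: "\<And>b. b \<in> B \<Longrightarrow> D *v b = (b \<bullet> (D *v b)) *\<^sub>R b"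
    and unit: "\<And>b. b \<in> B \<Longrightarrow> norm b = 1"
    and expand: "\<And>w. w = (\<Sum>b\<in>B. (b \<bullet> w) *\<^sub>R b)"
    unfolding orthonormal_eigenbasis_def by blast+
  \<comment> \<open>For an eigenvector b of D with eigenvalue m, S^2 - T^2 = S D + D T gives
    m (b S b + b T b) = 0, and b S b = b T b = 0 forces S b = T b = 0.\<close>
  have D_kernel: "D *v b = 0" if "b \<in> B" for b
  proof -
    define m where "m = b \<bullet> (D *v b)"
    have Db: "D *v b = m *\<^sub>R b" unfolding m_def using that by (rule eigen)
    have "S *v (D *v b) + D *v (T *v b) = S *v (S *v b) - T *v (T *v b)"
      by (simp add: D_def matrix_vector_mult_diff_rdistrib matrix_vector_mult_diff_distrib)
    also have "\<dots> = 0" using square by (simp add: matrix_vector_mul_assoc)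
    finally have "b \<bullet> (S *v (D *v b)) + (D *v b) \<bullet> (T *v b) = 0"
      using symmetric_matrix_inner[OF \<open>transpose D = D\<close>, of b "T *v b"]
      by (metis inner_add_right inner_zero_right)
    then have "m * (b \<bullet> (S *v b) + b \<bullet> (T *v b)) = 0"
      by (simp add: Db matrix_vector_mult_scaleR algebra_simps)
    moreover have "0 \<le> b \<bullet> (S *v b)" "0 \<le> b \<bullet> (T *v b)" using S T by (auto simp: psd_def)
    ultimately have "m = 0 \<or> b \<bullet> (S *v b) = 0 \<and> b \<bullet> (T *v b) = 0" by auto
    then show ?thesis
    proof
      assume "b \<bullet> (S *v b) = 0 \<and> b \<bullet> (T *v b) = 0"
      then have "S *v b = 0" "T *v b = 0" using psd_kernel S T by blast+
      then show ?thesis by (simp add: D_def matrix_vector_mult_diff_rdistrib)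
    qed (simp add: Db)
  qed
  have "D *v w = 0 *v w" for w
  proof -
    have "D *v w = D *v (\<Sum>b\<in>B. (b \<bullet> w) *\<^sub>R b)" by (rule arg_cong[OF expand])
    also have "\<dots> = 0"
      by (simp add: D_kernel linear_sum[OF matrix_vector_mul_linear]
          matrix_vector_mult_scaleR)
    finally show ?thesis by simp
  qed
  then have "D = 0" by (simp add: matrix_eq)
  then show ?thesis by (simp add: D_def)
qed

lemma psd_mat_sqrt:
  fixes A :: "real^'n^'n"
  assumes "psd A"
  shows "psd (mat_sqrt A)" and "mat_sqrt A ** mat_sqrt A = A"
proof -
  have "\<exists>!S. psd S \<and> S ** S = A"
    using psd_sqrt_exists[OF assms] psd_sqrt_unique by metis
  then have "psd (mat_sqrt A) \<and> mat_sqrt A ** mat_sqrt A = A"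
    unfolding mat_sqrt_def by (rule theI')
  then show "psd (mat_sqrt A)" and "mat_sqrt A ** mat_sqrt A = A" by auto
qed

lemma norm_mat_sqrt_mult_vec_squared:
  fixes A :: "real^'n^'n"
  assumes "psd A"
  shows "(norm (mat_sqrt A *v v))\<^sup>2 = v \<bullet> (A *v v)"
proof -
  have "(norm (mat_sqrt A *v v))\<^sup>2 = v \<bullet> (mat_sqrt A *v (mat_sqrt A *v v))"
    using psd_mat_sqrt(1)[OF assms]
    by (simp add: dot_square_norm[symmetric] psd_def symmetric_matrix_inner)
  also have "\<dots> = v \<bullet> (A *v v)"
    by (simp add: matrix_vector_mul_assoc psd_mat_sqrt(2)[OF assms])
  finally show ?thesis .
qed

lemma psd_matrix_inv:
  fixes X :: "real^'n^'n"
  assumes "psd X" and "invertible X"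
  shows "psd (matrix_inv X)"
  unfolding psd_def
proof (intro conjI allI)
  show "transpose (matrix_inv X) = matrix_inv X"
    using assms by (simp add: psd_def transpose_matrix_inv_symmetric)
  fix v
  have "v \<bullet> (matrix_inv X *v v) = (X *v (matrix_inv X *v v)) \<bullet> (matrix_inv X *v v)"
    by (simp add: matrix_vector_mul_assoc matrix_inv_mult[OF assms(2)])
  also have "\<dots> \<ge> 0" using assms(1) by (simp add: psd_def inner_commute)
  finally show "0 \<le> v \<bullet> (matrix_inv X *v v)" .
qed

lemma psd_invertible_det_pos:
  fixes X :: "real^'n^'n"
  assumes "psd X" and "invertible X"
  shows "0 < det X"
proof -
  have "det X = (det (mat_sqrt X))\<^sup>2"
    by (simp add: power2_eq_square det_mul[symmetric] psd_mat_sqrt(2)[OF assms(1)])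
  moreover have "det X \<noteq> 0" using assms(2) by (simp add: invertible_det_nz)
  ultimately show ?thesis by simp
qed

lemma linear_design_mat: "linear (design_mat u)"
  by (rule linearI)
    (simp_all add: design_mat_def scaleR_add_left sum.distrib scaleR_sum_right)

lemma design_mat_axis: "design_mat u (axis i 1) = outer (u i)"
  by (simp add: design_mat_def axis_def if_distrib[of "\<lambda>r. r *\<^sub>R _"] sum.delta cong: if_cong)

lemma design_mat_shrink_and_raise:
  "design_mat u ((1 - s) *\<^sub>R x + t *\<^sub>R axis i 1)
    = (1 - s) *\<^sub>R design_mat u x + t *\<^sub>R rank_one (u i) (u i)"
  by (simp add: linear_add[OF linear_design_mat] linear_scale[OF linear_design_mat]
      design_mat_axis outer_eq_rank_one)

lemma transpose_design_mat: "transpose (design_mat u x) = design_mat u x"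
  by (simp add: design_mat_def transpose_sum transpose_scalar outer_eq_rank_one
      transpose_rank_one)

lemma inner_design_mat: "v \<bullet> (design_mat u x *v v) = (\<Sum>i\<in>UNIV. x $ i * (u i \<bullet> v)\<^sup>2)"
  by (simp add: design_mat_def sum_matrix_vector_mult scaleR_matrix_vector_assoc[symmetric]
      outer_eq_rank_one rank_one_mult_vec inner_sum_right power2_eq_square inner_commute
      mult.assoc)

lemma psd_design_mat:
  assumes "\<And>i. 0 \<le> x $ i"
  shows "psd (design_mat u x)"
  using assms by (auto simp: psd_def transpose_design_mat inner_design_mat intro!: sum_nonneg)

lemma optimal_det_le:
  assumes "optimal u c b x" and "feasible c b y" and "0 < det (design_mat u x)"
  shows "det (design_mat u y) \<le> det (design_mat u x)"
proof (cases "0 < det (design_mat u y)")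
  case True
  have "logdet (design_mat u y) \<le> logdet (design_mat u x)"
    using assms(1,2) by (simp add: optimal_def)
  then show ?thesis using True assms(3) by (simp add: logdet_def)
qed (use assms(3) in simp)

lemma feasible_shrink_and_raise:
  assumes "feasible c b x" and "0 \<le> s" "s \<le> 1" "0 \<le> t" "t \<le> 1 - x $ i"
    and budget: "\<And>j. t * infnorm (c j) \<le> s * b j"
  shows "feasible c b ((1 - s) *\<^sub>R x + t *\<^sub>R axis i 1)"
  unfolding feasible_def
proof (intro conjI allI)
  have x01: "0 \<le> x $ k" "x $ k \<le> 1" for k using assms(1) by (auto simp: feasible_def)
  fix j k
  have "c j \<bullet> ((1 - s) *\<^sub>R x + t *\<^sub>R axis i 1) = (1 - s) * (c j \<bullet> x) + t * c j $ i"
    by (simp add: inner_add_right inner_axis)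
  also have "\<dots> \<le> (1 - s) * b j + s * b j"
  proof (rule add_mono)
    show "(1 - s) * (c j \<bullet> x) \<le> (1 - s) * b j"
      using assms(1,3) by (intro mult_left_mono) (auto simp: feasible_def)
    have "c j $ i \<le> infnorm (c j)" using component_le_infnorm_cart[of "c j" i] by simp
    then show "t * c j $ i \<le> s * b j"
      using budget[of j] \<open>0 \<le> t\<close> by (meson mult_left_mono order_trans)
  qed
  finally show "c j \<bullet> ((1 - s) *\<^sub>R x + t *\<^sub>R axis i 1) \<le> b j" by (simp add: algebra_simps)
  have "0 \<le> (1 - s) * x $ k" using x01 \<open>s \<le> 1\<close> by simp
  then show "0 \<le> ((1 - s) *\<^sub>R x + t *\<^sub>R axis i 1) $ k" using \<open>0 \<le> t\<close> by (simp add: axis_def)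
  have "(1 - s) * x $ k \<le> x $ k" using x01 \<open>0 \<le> s\<close> by (simp add: algebra_simps)
  then show "((1 - s) *\<^sub>R x + t *\<^sub>R axis i 1) $ k \<le> 1"
    using x01(2)[of k] \<open>t \<le> 1 - x $ i\<close> by (auto simp: axis_def)
qed

section \<open>Perturbing an optimal solution\<close>

lemma exists_step_det_factor_gt_one:
  fixes d :: nat and \<epsilon> g T :: real
  assumes d: "1 \<le> d" and \<epsilon>: "0 < \<epsilon>" and g: "\<epsilon> < g" and T: "0 < T"
  shows "\<exists>t>0. t \<le> T \<and> t * \<epsilon> / d < 1 \<and>
    1 < (1 - t * \<epsilon> / d) ^ d * (1 + t / (1 - t * \<epsilon> / d) * g)"
proof -
  define a where "a = \<epsilon> / d"
  define K where "K = real (d - 1) * a * (g - a)"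
  have "0 < a" "a \<le> \<epsilon>" "real d * a = \<epsilon>" using d \<epsilon> by (auto simp: a_def field_simps)
  then have "0 \<le> K" using g by (simp add: K_def)
  define t where "t = min T (min (1 / (2 * a)) ((g - \<epsilon>) / (K + 1)))"
  define s where "s = t * a"
  have "0 < t" "t \<le> T" using T \<open>0 < a\<close> g \<open>0 \<le> K\<close> by (auto simp: t_def)
  have "t \<le> 1 / (2 * a)" by (simp add: t_def)
  then have "0 \<le> s" "s < 1" using \<open>0 < a\<close> \<open>0 < t\<close> by (auto simp: s_def field_simps)
  have "t * K \<le> (g - \<epsilon>) / (K + 1) * K"
    using \<open>0 \<le> K\<close> by (intro mult_right_mono) (simp_all add: t_def)
  also have "\<dots> < g - \<epsilon>" using \<open>0 \<le> K\<close> g by (simp add: field_simps)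
  finally have "1 < 1 + t * ((g - \<epsilon>) - t * K)" using \<open>0 < t\<close> by simp
  \<comment> \<open>Bernoulli's inequality makes the first-order gain t (g - \<epsilon>) visible.\<close>
  also have "\<dots> = (1 - real (d - 1) * s) * (1 - s + t * g)"
    using d by (simp add: s_def K_def of_nat_diff \<open>real d * a = \<epsilon>\<close>[symmetric] algebra_simps)
  also have "\<dots> \<le> (1 - s) ^ (d - 1) * (1 - s + t * g)"
    using Bernoulli_inequality[of "- s" "d - 1"] \<open>s < 1\<close> \<open>0 < t\<close> \<open>0 \<le> s\<close> g \<epsilon>
    by (intro mult_right_mono) simp_all
  also have "\<dots> = (1 - s) ^ d * (1 + t / (1 - s) * g)"
    using d \<open>s < 1\<close> by (simp add: power_eq_if field_simps)
  finally show ?thesis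
    using \<open>0 < t\<close> \<open>t \<le> T\<close> \<open>s < 1\<close> unfolding s_def a_def by auto
qed

lemma optimal_leverage_le:
  fixes u :: "'n::finite \<Rightarrow> real^'d" and x :: "real^'n"
  assumes "0 < \<epsilon>" and budgets: "\<And>j. real CARD('d) * infnorm (c j) / \<epsilon> \<le> b j"
    and opt: "optimal u c b x" and nonsing: "invertible (design_mat u x)" and "x $ i < 1"
  shows "u i \<bullet> (matrix_inv (design_mat u x) *v u i) \<le> \<epsilon>"
proof (rule ccontr)
  define X where "X = design_mat u x"
  define g where "g = u i \<bullet> (matrix_inv X *v u i)"
  assume "\<not> ?thesis"
  then have "\<epsilon> < g" by (simp add: g_def X_def)
  moreover have "1 \<le> CARD('d)" by (simp add: Suc_le_eq)
  ultimately obtain t where "0 < t" "t \<le> 1 - x $ i" "t * \<epsilon> / CARD('d) < 1"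
    and gain: "1 < (1 - t * \<epsilon> / CARD('d)) ^ CARD('d) * (1 + t / (1 - t * \<epsilon> / CARD('d)) * g)"
    using exists_step_det_factor_gt_one[of "CARD('d)" \<epsilon> g "1 - x $ i"] \<open>0 < \<epsilon>\<close> \<open>x $ i < 1\<close>
    by auto
  define s where "s = t * \<epsilon> / CARD('d)"
  define y where "y = (1 - s) *\<^sub>R x + t *\<^sub>R axis i 1"
  have "0 \<le> s" "s < 1" using \<open>0 < t\<close> \<open>0 < \<epsilon>\<close> \<open>t * \<epsilon> / CARD('d) < 1\<close> by (simp_all add: s_def)
  have "feasible c b x" using opt by (simp add: optimal_def)
  have "t * infnorm (c j) \<le> s * b j" for j
  proof -
    have "t * infnorm (c j) = s * (real CARD('d) * infnorm (c j) / \<epsilon>)"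
      using \<open>0 < \<epsilon>\<close> by (simp add: s_def)
    also have "\<dots> \<le> s * b j" using budgets \<open>0 \<le> s\<close> by (rule mult_left_mono)
    finally show ?thesis .
  qed
  then have "feasible c b y"
    unfolding y_def using \<open>feasible c b x\<close> \<open>0 \<le> s\<close> \<open>s < 1\<close> \<open>0 < t\<close> \<open>t \<le> 1 - x $ i\<close>
    by (intro feasible_shrink_and_raise) simp_all
  have "det (design_mat u y) = det X * ((1 - s) ^ CARD('d) * (1 + t / (1 - s) * g))"
    using \<open>s < 1\<close> nonsing
    by (simp add: y_def X_def g_def design_mat_shrink_and_raise det_scaleR_add_rank_one)
  moreover have "0 < det X"
    using \<open>feasible c b x\<close> nonsing
    by (auto simp: X_def feasible_def intro: psd_invertible_det_pos psd_design_mat)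
  ultimately have "det X < det (design_mat u y)" using gain by (simp add: s_def)
  then show False
    using optimal_det_le[OF opt \<open>feasible c b y\<close>] \<open>0 < det X\<close> by (simp add: X_def)
qed

theorem lemma4p12:
  fixes u :: "'n::finite \<Rightarrow> real^'d"
    and c :: "'m::finite \<Rightarrow> real^'n"
    and b :: "'m \<Rightarrow> real"
    and \<epsilon> :: real
    and x :: "real^'n"
  assumes c_nonneg: "\<And>j i. 0 \<le> c j $ i"
    and eps_pos: "\<epsilon> > 0"
    and budgets: "\<And>j. b j \<ge> real CARD('d) * infnorm (c j) / \<epsilon>"
    and opt: "optimal u c b x"
    and nonsing: "invertible (design_mat u x)"
  shows "\<forall>i. 0 < x $ i \<and> x $ i < 1 \<longrightarrow>
           (norm (mat_sqrt (matrix_inv (design_mat u x)) *v u i))\<^sup>2 \<le> \<epsilon>"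
proof (intro allI impI)
  fix i assume "0 < x $ i \<and> x $ i < 1"
  have "psd (design_mat u x)"
    using opt by (intro psd_design_mat) (simp add: optimal_def feasible_def)
  then have "psd (matrix_inv (design_mat u x))" using nonsing by (rule psd_matrix_inv)
  then have "(norm (mat_sqrt (matrix_inv (design_mat u x)) *v u i))\<^sup>2
      = u i \<bullet> (matrix_inv (design_mat u x) *v u i)"
    by (rule norm_mat_sqrt_mult_vec_squared)
  also have "\<dots> \<le> \<epsilon>"
    using optimal_leverage_le[OF eps_pos budgets opt nonsing] \<open>0 < x $ i \<and> x $ i < 1\<close> by blast
  finally show "(norm (mat_sqrt (matrix_inv (design_mat u x)) *v u i))\<^sup>2 \<le> \<epsilon>" .
qed

end
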